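(* Let $\mathcal{X}$ be a symmetric configuration $v_3$ with strong chromatic number 5, and suppose there is a set $T$ of at most 2 points of $\mathcal{X}$ and an assignment of 4 colours to the points not in $T$ such that no two points not in $T$ lying in a common block receive the same colour. Then $\mathcal{X}$ has weak chromatic number 2 (equivalently, $\mathcal{X}$ has a blocking set).
   Context: A symmetric configuration $v_3$ consists of a set of $v$ points and a collection of $v$ blocks, each block being a 3-element subset of the points, such that every point lies in exactly 3 blocks and any two distinct points lie in at most one common block. A strong colouring is an assignment of colours to points such that the three points of every block receive three distinct colours; the strong chromatic number is the minimum number of colours in a strong colouring. A weak colouring is an assignment of colours to points such that no block is monochromatic; the weak chromatic number is the minimum number of colours in a weak colouring. A blocking set is a subset $Q$ of the points such that every block contains at least one point of $Q$ and at least one point not in $Q$. *)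

theory Defs
  imports Main
begin

definition config_v3 :: "'a set \<Rightarrow> 'a set set \<Rightarrow> bool" where
  "config_v3 P B \<longleftrightarrow> finite P \<and> B \<subseteq> Pow P \<and> card B = card P
     \<and> (\<forall>b\<in>B. card b = 3)
     \<and> (\<forall>x\<in>P. card {b\<in>B. x \<in> b} = 3)
     \<and> (\<forall>x\<in>P. \<forall>y\<in>P. x \<noteq> y \<longrightarrow> card {b\<in>B. x \<in> b \<and> y \<in> b} \<le> 1)"

definition strong_colouring :: "'a set set \<Rightarrow> ('a \<Rightarrow> 'c) \<Rightarrow> bool" where
  "strong_colouring B c \<longleftrightarrow> (\<forall>b\<in>B. inj_on c b)"

definition weak_colouring :: "'a set set \<Rightarrow> ('a \<Rightarrow> 'c) \<Rightarrow> bool" where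
  "weak_colouring B c \<longleftrightarrow> (\<forall>b\<in>B. \<exists>x\<in>b. \<exists>y\<in>b. c x \<noteq> c y)"

definition strong_chromatic_number :: "'a set \<Rightarrow> 'a set set \<Rightarrow> nat" where
  "strong_chromatic_number P B =
     (LEAST k. \<exists>c :: 'a \<Rightarrow> nat. c ` P \<subseteq> {..<k} \<and> strong_colouring B c)"

definition weak_chromatic_number :: "'a set \<Rightarrow> 'a set set \<Rightarrow> nat" where
  "weak_chromatic_number P B =
     (LEAST k. \<exists>c :: 'a \<Rightarrow> nat. c ` P \<subseteq> {..<k} \<and> weak_colouring B c)"

end

theory Submission
  imports Defs
begin

text \<open>
  The four colours split into two pairs in three ways, and each split turns the 4-colouring of
  the points outside \<open>T\<close> into a 2-colouring in which no block avoiding \<open>T\<close> is monochromatic.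
  A block meeting \<open>T\<close> in a single point \<open>t\<close> has its other two points on the same side of exactly
  one split, so the at most three such blocks through \<open>t\<close> can be bad for at most three splits in
  total. Hence some split leaves every \<open>t \<in> T\<close> with at most one bad block, which \<open>t\<close> repairs by
  taking the opposite colour; when a block contains both points of \<open>T\<close>, each of them lies in at
  most two other blocks, and the split can be chosen so that one of them is unconstrained and can
  be coloured against the third point of that block.
  The hypothesis on the strong chromatic number only serves to exclude the empty configuration.
\<close>

text \<open>For \<open>k \<in> {1, 2, 3}\<close> these are the three splittings of the colours \<open>{0, 1, 2, 3}\<close>
  into two pairs, \<open>{0, k}\<close> and its complement.\<close>
definition pair_split :: "nat \<Rightarrow> nat \<Rightarrow> bool" where
  "pair_split k n \<longleftrightarrow> n = 0 \<or> n = k"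

lemma pair_split_not_constant3:
  assumes "a < 4" "b < 4" "d < 4" "a \<noteq> b" "b \<noteq> d" "a \<noteq> d" "k \<in> {1, 2, 3}"
  shows "pair_split k a \<noteq> pair_split k b \<or> pair_split k b \<noteq> pair_split k d"
  using assms unfolding pair_split_def by auto

lemma pair_split_unique:
  assumes "a < 4" "b < 4" "a \<noteq> b" "k \<in> {1, 2, 3}" "k' \<in> {1, 2, 3}"
    and "pair_split k a = pair_split k b" "pair_split k' a = pair_split k' b"
  shows "k = k'"
  using assms unfolding pair_split_def by auto

lemma exists_index_small3:
  fixes a b :: "nat \<Rightarrow> nat"
  assumes "(\<Sum>k\<in>{1, 2, 3}. a k) \<le> 3" "(\<Sum>k\<in>{1, 2, 3}. b k) \<le> 3"
    and "J \<Longrightarrow> (\<Sum>k\<in>{1, 2, 3}. a k) \<le> 2" "J \<Longrightarrow> (\<Sum>k\<in>{1, 2, 3}. b k) \<le> 2"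
  shows "\<exists>k\<in>{1, 2, 3}. a k \<le> 1 \<and> b k \<le> 1 \<and> (J \<longrightarrow> a k = 0 \<or> b k = 0)"
  using assms by (cases J) (auto simp: not_le)

lemma config_v3_finite_blocks: "config_v3 P B \<Longrightarrow> finite B"
  unfolding config_v3_def by (meson finite_Pow_iff rev_finite_subset)

lemma config_v3_block_through_two_points_unique:
  assumes "config_v3 P B" "x \<in> P" "y \<in> P" "x \<noteq> y"
    and "b \<in> B" "x \<in> b" "y \<in> b" "b' \<in> B" "x \<in> b'" "y \<in> b'"
  shows "b' = b"
proof -
  have "card {b\<in>B. x \<in> b \<and> y \<in> b} \<le> 1" "finite {b\<in>B. x \<in> b \<and> y \<in> b}"
    using assms(1-4) config_v3_finite_blocks[OF assms(1)] unfolding config_v3_def by auto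
  then show ?thesis using assms(5-) by (auto simp: card_le_Suc0_iff_eq)
qed

lemma config_v3_empty_strong_chromatic_number:
  assumes "config_v3 {} B"
  shows "strong_chromatic_number {} B = 0"
proof -
  have "B = {}" using assms unfolding config_v3_def by fastforce
  then show ?thesis
    unfolding strong_chromatic_number_def by (intro Least_eq_0) (simp add: strong_colouring_def)
qed

lemma weak_chromatic_number_eq_2I:
  assumes "B \<subseteq> Pow P" "B \<noteq> {}" "weak_colouring B (w :: 'a \<Rightarrow> bool)"
  shows "weak_chromatic_number P B = 2"
  unfolding weak_chromatic_number_def
proof (rule Least_equality)
  have "weak_colouring B (of_bool \<circ> w :: 'a \<Rightarrow> nat)"
    using assms(3) unfolding weak_colouring_def by (metis comp_apply of_bool_eq_iff)
  moreover have "(of_bool \<circ> w :: 'a \<Rightarrow> nat) ` P \<subseteq> {..<2}" by auto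
  ultimately show "\<exists>c :: 'a \<Rightarrow> nat. c ` P \<subseteq> {..<2} \<and> weak_colouring B c" by blast
next
  fix k assume "\<exists>c :: 'a \<Rightarrow> nat. c ` P \<subseteq> {..<k} \<and> weak_colouring B c"
  then obtain d :: "'a \<Rightarrow> nat" where d: "d ` P \<subseteq> {..<k}" "weak_colouring B d" by blast
  obtain b where b: "b \<in> B" using assms(2) by blast
  then obtain x y where "x \<in> b" "y \<in> b" "d x \<noteq> d y"
    using d(2) unfolding weak_colouring_def by blast
  moreover from this have "d x < k" "d y < k" using b assms(1) d(1) by auto
  ultimately show "2 \<le> k" by linarith
qed

locale v3_coloured_off_two_points =
  fixes P :: "'a set" and B :: "'a set set" and c :: "'a \<Rightarrow> nat" and t1 t2 :: 'a
  assumes config: "config_v3 P B"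
    and exceptional_in: "t1 \<in> P" "t2 \<in> P"
    and colour_lt4: "\<And>x. x \<in> P - {t1, t2} \<Longrightarrow> c x < 4"
    and colour_inj: "\<And>b. b \<in> B \<Longrightarrow> inj_on c (b - {t1, t2})"
begin

lemma finite_blocks: "finite B"
  using config by (rule config_v3_finite_blocks)

lemma block_subset: "b \<in> B \<Longrightarrow> b \<subseteq> P"
  using config unfolding config_v3_def by auto

lemma card_block: "b \<in> B \<Longrightarrow> card b = 3"
  using config unfolding config_v3_def by auto

definition pendant_blocks :: "'a \<Rightarrow> 'a set set" where
  "pendant_blocks t = {b\<in>B. b \<inter> {t1, t2} = {t}}"

definition mono_pendant_blocks :: "nat \<Rightarrow> 'a \<Rightarrow> 'a set set" where
  "mono_pendant_blocks k t = {b \<in> pendant_blocks t.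
     \<forall>x\<in>b - {t}. \<forall>y\<in>b - {t}. pair_split k (c x) = pair_split k (c y)}"

lemma pendant_block_other_points:
  assumes "b \<in> pendant_blocks t"
  obtains x y where "b - {t} = {x, y}" "x \<noteq> y" "x \<notin> {t1, t2}" "y \<notin> {t1, t2}"
    "c x < 4" "c y < 4" "c x \<noteq> c y"
proof -
  have b: "b \<in> B" "t \<in> b" "b \<inter> {t1, t2} = {t}" using assms unfolding pendant_blocks_def by auto
  then have "card (b - {t}) = 2" using card_block by simp
  then obtain x y where xy: "b - {t} = {x, y}" "x \<noteq> y" by (auto simp: card_2_iff)
  then have "x \<in> b - {t1, t2}" "y \<in> b - {t1, t2}" using b(3) by blast+
  moreover from this have "c x \<noteq> c y" using colour_inj[OF b(1)] xy(2) by (auto dest: inj_onD)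
  ultimately show ?thesis using that xy block_subset[OF b(1)] colour_lt4 by blast
qed

lemma mono_pendant_blocks_disjoint:
  assumes "k \<in> {1, 2, 3}" "k' \<in> {1, 2, 3}" "k \<noteq> k'"
  shows "mono_pendant_blocks k t \<inter> mono_pendant_blocks k' t = {}"
proof (rule ccontr)
  assume "mono_pendant_blocks k t \<inter> mono_pendant_blocks k' t \<noteq> {}"
  then obtain b where b: "b \<in> mono_pendant_blocks k t" "b \<in> mono_pendant_blocks k' t" by blast
  then have "b \<in> pendant_blocks t" unfolding mono_pendant_blocks_def by simp
  then obtain x y where xy: "b - {t} = {x, y}" "c x < 4" "c y < 4" "c x \<noteq> c y"
    by (rule pendant_block_other_points)
  have "pair_split k (c x) = pair_split k (c y)" "pair_split k' (c x) = pair_split k' (c y)"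
    using b xy(1) unfolding mono_pendant_blocks_def by blast+
  then show False using pair_split_unique[OF xy(2-4) assms(1,2)] assms(3) by blast
qed

lemma sum_card_mono_pendant_blocks:
  "(\<Sum>k\<in>{1, 2, 3}. card (mono_pendant_blocks k t)) \<le> card (pendant_blocks t)"
proof -
  have fin: "finite (pendant_blocks t)" using finite_blocks unfolding pendant_blocks_def by simp
  have "(\<Sum>k\<in>{1, 2, 3}. card (mono_pendant_blocks k t)) = card (\<Union>k\<in>{1, 2, 3}. mono_pendant_blocks k t)"
    using mono_pendant_blocks_disjoint fin
    by (intro card_UN_disjoint[symmetric]) (auto simp: mono_pendant_blocks_def)
  also have "\<dots> \<le> card (pendant_blocks t)"
    using fin by (intro card_mono) (auto simp: mono_pendant_blocks_def)
  finally show ?thesis .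
qed

lemma card_pendant_blocks_le3:
  assumes "t \<in> P"
  shows "card (pendant_blocks t) \<le> 3"
proof -
  have "card (pendant_blocks t) \<le> card {b\<in>B. t \<in> b}"
    using finite_blocks by (intro card_mono) (auto simp: pendant_blocks_def)
  then show ?thesis using config assms unfolding config_v3_def by auto
qed

lemma card_pendant_blocks_le2:
  assumes "J \<in> B" "t1 \<in> J" "t2 \<in> J" "t1 \<noteq> t2" "t \<in> {t1, t2}"
  shows "card (pendant_blocks t) \<le> 2"
proof -
  have "t \<in> P" using assms(5) exceptional_in by auto
  have "card (pendant_blocks t) \<le> card ({b\<in>B. t \<in> b} - {J})"
    using finite_blocks assms by (intro card_mono) (auto simp: pendant_blocks_def)
  also have "\<dots> = 2"
    using config \<open>t \<in> P\<close> assms finite_blocks unfolding config_v3_def by (subst card_Diff_singleton) auto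
  finally show ?thesis .
qed

lemma exists_good_split:
  obtains k where "k \<in> {1, 2, 3}"
    "card (mono_pendant_blocks k t1) \<le> 1" "card (mono_pendant_blocks k t2) \<le> 1"
    "\<And>J. J \<in> B \<Longrightarrow> t1 \<in> J \<Longrightarrow> t2 \<in> J \<Longrightarrow> t1 \<noteq> t2 \<Longrightarrow>
       mono_pendant_blocks k t1 = {} \<or> mono_pendant_blocks k t2 = {}"
proof -
  let ?J = "\<exists>J\<in>B. t1 \<in> J \<and> t2 \<in> J \<and> t1 \<noteq> t2"
  have le3: "(\<Sum>k\<in>{1, 2, 3}. card (mono_pendant_blocks k t)) \<le> 3" if "t \<in> {t1, t2}" for t
  proof -
    have "card (pendant_blocks t) \<le> 3" using card_pendant_blocks_le3 that exceptional_in by blast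
    then show ?thesis using sum_card_mono_pendant_blocks[of t] by linarith
  qed
  have le2: "(\<Sum>k\<in>{1, 2, 3}. card (mono_pendant_blocks k t)) \<le> 2" if "?J" "t \<in> {t1, t2}" for t
  proof -
    have "card (pendant_blocks t) \<le> 2" using card_pendant_blocks_le2 that by blast
    then show ?thesis using sum_card_mono_pendant_blocks[of t] by linarith
  qed
  have "\<exists>k\<in>{1, 2, 3}. card (mono_pendant_blocks k t1) \<le> 1 \<and> card (mono_pendant_blocks k t2) \<le> 1
      \<and> (?J \<longrightarrow> card (mono_pendant_blocks k t1) = 0 \<or> card (mono_pendant_blocks k t2) = 0)"
    by (intro exists_index_small3 le3 le2) auto
  then obtain k where k: "k \<in> {1, 2, 3}"
    "card (mono_pendant_blocks k t1) \<le> 1" "card (mono_pendant_blocks k t2) \<le> 1"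
    "?J \<Longrightarrow> card (mono_pendant_blocks k t1) = 0 \<or> card (mono_pendant_blocks k t2) = 0"
    by blast
  have "finite (mono_pendant_blocks k t)" for t
    using finite_blocks unfolding mono_pendant_blocks_def pendant_blocks_def by simp
  with k show ?thesis by (intro that[OF k(1-3)]) auto
qed

text \<open>
  The exceptional points \<open>t1\<close>, \<open>t2\<close> take the colour opposite to the monochromatic part of their (at most one)
  bad block, and the default \<open>v\<close> when they have none.
\<close>
definition split_colouring :: "nat \<Rightarrow> bool \<Rightarrow> 'a \<Rightarrow> bool" where
  "split_colouring k v x =
     (if x \<in> {t1, t2} then
        (if mono_pendant_blocks k x = {} then v
         else (\<forall>b\<in>mono_pendant_blocks k x. \<forall>y\<in>b - {x}. \<not> pair_split k (c y)))
      else pair_split k (c x))"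

lemma split_colouring_outside_exceptional:
  "x \<notin> {t1, t2} \<Longrightarrow> split_colouring k v x = pair_split k (c x)"
  unfolding split_colouring_def by simp

lemma split_colouring_block_avoiding_exceptional:
  assumes "k \<in> {1, 2, 3}" "b \<in> B" "b \<inter> {t1, t2} = {}"
  shows "\<exists>x\<in>b. \<exists>y\<in>b. split_colouring k v x \<noteq> split_colouring k v y"
proof -
  obtain x y z where b: "b = {x, y, z}" "x \<noteq> y" "y \<noteq> z" "x \<noteq> z"
    using card_block[OF assms(2)] by (auto simp: card_3_iff)
  then have off: "x \<in> b - {t1, t2}" "y \<in> b - {t1, t2}" "z \<in> b - {t1, t2}" using assms(3) by auto
  then have "c x \<noteq> c y" "c y \<noteq> c z" "c x \<noteq> c z"
    using colour_inj[OF assms(2)] b(2-4) by (auto dest: inj_onD)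
  moreover have "c x < 4" "c y < 4" "c z < 4" using off block_subset[OF assms(2)] colour_lt4 by auto
  moreover have "split_colouring k v u = pair_split k (c u)" if "u \<in> b" for u
    using that assms(3) split_colouring_outside_exceptional by blast
  ultimately show ?thesis using pair_split_not_constant3[OF _ _ _ _ _ _ assms(1)] b(1) by auto
qed

lemma split_colouring_pendant_block:
  assumes "b \<in> pendant_blocks t" "card (mono_pendant_blocks k t) \<le> 1"
  shows "\<exists>x\<in>b. \<exists>y\<in>b. split_colouring k v x \<noteq> split_colouring k v y"
proof -
  have t: "t \<in> b" "t \<in> {t1, t2}" using assms(1) unfolding pendant_blocks_def by auto
  obtain x y where xy: "b - {t} = {x, y}" "x \<notin> {t1, t2}" "y \<notin> {t1, t2}"
    by (rule pendant_block_other_points[OF assms(1)])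
  show ?thesis
  proof (cases "pair_split k (c x) = pair_split k (c y)")
    case False
    then show ?thesis using xy split_colouring_outside_exceptional[of x] split_colouring_outside_exceptional[of y] by blast
  next
    case True
    then have "b \<in> mono_pendant_blocks k t"
      using assms(1) xy(1) unfolding mono_pendant_blocks_def by auto
    moreover have "finite (mono_pendant_blocks k t)"
      using finite_blocks unfolding mono_pendant_blocks_def pendant_blocks_def by simp
    ultimately have "mono_pendant_blocks k t = {b}"
      using assms(2) by (auto simp: card_le_Suc0_iff_eq)
    then have "split_colouring k v t = (\<not> pair_split k (c x))"
      using t(2) True xy(1) unfolding split_colouring_def by auto
    then show ?thesis using t(1) xy split_colouring_outside_exceptional[of x] by blast
  qed
qed

lemma weak_colouring_split_colouring:
  assumes "k \<in> {1, 2, 3}"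
    and "card (mono_pendant_blocks k t1) \<le> 1" "card (mono_pendant_blocks k t2) \<le> 1"
    and joint: "\<And>J. J \<in> B \<Longrightarrow> t1 \<in> J \<Longrightarrow> t2 \<in> J \<Longrightarrow> t1 \<noteq> t2 \<Longrightarrow>
      (mono_pendant_blocks k t1 = {} \<or> mono_pendant_blocks k t2 = {})
      \<and> (\<exists>z\<in>J - {t1, t2}. v \<noteq> pair_split k (c z))"
  shows "weak_colouring B (split_colouring k v)"
  unfolding weak_colouring_def
proof
  fix b assume b: "b \<in> B"
  consider "b \<inter> {t1, t2} = {}" | t where "b \<in> pendant_blocks t" | "t1 \<in> b" "t2 \<in> b" "t1 \<noteq> t2"
    using b unfolding pendant_blocks_def by blast
  then show "\<exists>x\<in>b. \<exists>y\<in>b. split_colouring k v x \<noteq> split_colouring k v y"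
  proof cases
    case 1
    then show ?thesis using split_colouring_block_avoiding_exceptional[OF assms(1) b] by blast
  next
    case (2 t)
    moreover have "t \<in> {t1, t2}" using 2 unfolding pendant_blocks_def by auto
    ultimately show ?thesis using split_colouring_pendant_block assms(2,3) by blast
  next
    case 3
    then obtain z where z: "z \<in> b - {t1, t2}" "v \<noteq> pair_split k (c z)"
      and free: "mono_pendant_blocks k t1 = {} \<or> mono_pendant_blocks k t2 = {}"
      using joint[OF b] by blast
    have "split_colouring k v z \<noteq> split_colouring k v t1 \<or> split_colouring k v z \<noteq> split_colouring k v t2"
      using z free split_colouring_outside_exceptional unfolding split_colouring_def by auto
    then show ?thesis using z(1) 3 by blast
  qed
qed

theorem exists_weak_2_colouring: "\<exists>w :: 'a \<Rightarrow> bool. weak_colouring B w"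
proof -
  obtain k where k: "k \<in> {1, 2, 3}"
    "card (mono_pendant_blocks k t1) \<le> 1" "card (mono_pendant_blocks k t2) \<le> 1"
    "\<And>J. J \<in> B \<Longrightarrow> t1 \<in> J \<Longrightarrow> t2 \<in> J \<Longrightarrow> t1 \<noteq> t2 \<Longrightarrow>
       mono_pendant_blocks k t1 = {} \<or> mono_pendant_blocks k t2 = {}"
    using exists_good_split by blast
  show ?thesis
  proof (cases "\<exists>J\<in>B. t1 \<in> J \<and> t2 \<in> J \<and> t1 \<noteq> t2")
    case True
    then obtain J where J: "J \<in> B" "t1 \<in> J" "t2 \<in> J" "t1 \<noteq> t2" by blast
    then have "card (J - {t1, t2}) = 1" using card_block by (simp add: card_Diff_subset)
    then obtain z where z: "z \<in> J - {t1, t2}" by (auto simp: card_1_singleton_iff)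
    have "weak_colouring B (split_colouring k (\<not> pair_split k (c z)))"
      using k z config_v3_block_through_two_points_unique[OF config exceptional_in J(4,1,2,3)]
      by (intro weak_colouring_split_colouring) blast+
    then show ?thesis by blast
  next
    case False
    then have "weak_colouring B (split_colouring k True)"
      using k by (intro weak_colouring_split_colouring) blast+
    then show ?thesis by blast
  qed
qed

end

lemma subset_doubleton_if_card_le2:
  assumes "finite T" "card T \<le> 2" "T \<subseteq> P" "P \<noteq> {}"
  obtains t1 t2 where "T \<subseteq> {t1, t2}" "t1 \<in> P" "t2 \<in> P"
proof -
  consider "T = {}" | t where "T = {t}" | t1 t2 where "T = {t1, t2}"
  proof -
    have "card T \<in> {0, 1, 2}" using assms(2) by auto
    then show ?thesis using that assms(1) by (auto simp: card_1_singleton_iff card_2_iff)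
  qed
  then show ?thesis using that assms(3,4) by cases blast+
qed

theorem mainTheorem17:
  fixes P :: "'a set" and B :: "'a set set" and T :: "'a set" and c :: "'a \<Rightarrow> nat"
  assumes "config_v3 P B"
    and "strong_chromatic_number P B = 5"
    and "T \<subseteq> P" and "card T \<le> 2"
    and "c ` (P - T) \<subseteq> {..<4}"
    and "\<forall>b\<in>B. \<forall>x\<in>b - T. \<forall>y\<in>b - T. x \<noteq> y \<longrightarrow> c x \<noteq> c y"
  shows "weak_chromatic_number P B = 2"
proof -
  have "P \<noteq> {}" using assms(1,2) config_v3_empty_strong_chromatic_number by fastforce
  moreover have "finite P" "B \<subseteq> Pow P" "card B = card P"
    using assms(1) unfolding config_v3_def by auto
  ultimately have "B \<noteq> {}" by auto
  obtain t1 t2 where t: "T \<subseteq> {t1, t2}" "t1 \<in> P" "t2 \<in> P"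
    using subset_doubleton_if_card_le2[OF finite_subset[OF assms(3)]] assms(3,4) \<open>finite P\<close> \<open>P \<noteq> {}\<close>
    by blast
  interpret v3_coloured_off_two_points P B c t1 t2
  proof
    show "\<And>x. x \<in> P - {t1, t2} \<Longrightarrow> c x < 4" using assms(5) t(1) by auto
    show "\<And>b. b \<in> B \<Longrightarrow> inj_on c (b - {t1, t2})" using assms(6) t(1) by (fastforce intro: inj_onI)
  qed (use assms(1) t in auto)
  obtain w :: "'a \<Rightarrow> bool" where "weak_colouring B w" using exists_weak_2_colouring by blast
  then show ?thesis using weak_chromatic_number_eq_2I \<open>B \<subseteq> Pow P\<close> \<open>B \<noteq> {}\<close> by blast
qed

end
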